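(* Fix $\rho>0$, integers $M\ge N\ge1$ and scalars $c_0,\dots,c_{N-1}>0$, and let $f(z):=c_0+c_1z+\cdots+c_{N-1}z^{N-1}-\mathcal{C}(\mathbf{c};z^M;N,\rho)^{-1}z^M$. (1) If $N>1$ and $A\in\mathbb{P}_N(\overline{D}(0,\rho))$ has a row or column whose entries are pairwise distinct, then $f[A]$ is positive definite. (2) For $A\in\mathbb{P}_N(\overline{D}(0,\rho))$, the equality $A^{\circ M}=\mathcal{C}(\mathbf{c};z^M;N,\rho)\,(c_0\mathbf{1}_{N\times N}+c_1A+\cdots+c_{N-1}A^{\circ(N-1)})$ never holds unless $N=1$ and $A=(\rho)$.
   Context: $\mathbb{P}_N(\overline{D}(0,\rho))$ is the set of $N\times N$ Hermitian positive semidefinite matrices with entries in the closed disc of radius $\rho$ about $0$; $f[A]$ is entrywise application; $A^{\circ n}$ is the entrywise power; $\mathbf{1}_{N\times N}$ is the all-ones matrix. $\mathcal{C}(\mathbf{c};z^M;N,\rho):=\sum_{j=0}^{N-1}\binom{M}{j}^2\binom{M-j-1}{N-j-1}^2\rho^{M-j}/c_j$. *)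

theory Defs
  imports "HOL-Analysis.Analysis"
begin

text \<open>N x N complex matrices are represented as functions nat => nat => complex,
  only the entries with indices < N being relevant.\<close>

definition hermitian_on :: "nat \<Rightarrow> (nat \<Rightarrow> nat \<Rightarrow> complex) \<Rightarrow> bool" where
  "hermitian_on N A \<longleftrightarrow> (\<forall>i<N. \<forall>j<N. A j i = cnj (A i j))"

definition quad_form :: "nat \<Rightarrow> (nat \<Rightarrow> nat \<Rightarrow> complex) \<Rightarrow> (nat \<Rightarrow> complex) \<Rightarrow> complex" where
  "quad_form N A x = (\<Sum>i<N. \<Sum>j<N. cnj (x i) * A i j * x j)"

definition psd_on :: "nat \<Rightarrow> (nat \<Rightarrow> nat \<Rightarrow> complex) \<Rightarrow> bool" where
  "psd_on N A \<longleftrightarrow> hermitian_on N A \<and>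
     (\<forall>x. Im (quad_form N A x) = 0 \<and> Re (quad_form N A x) \<ge> 0)"

definition posdef_on :: "nat \<Rightarrow> (nat \<Rightarrow> nat \<Rightarrow> complex) \<Rightarrow> bool" where
  "posdef_on N A \<longleftrightarrow> hermitian_on N A \<and>
     (\<forall>x. (\<exists>i<N. x i \<noteq> 0) \<longrightarrow> Im (quad_form N A x) = 0 \<and> Re (quad_form N A x) > 0)"

definition PN_disc :: "nat \<Rightarrow> real \<Rightarrow> (nat \<Rightarrow> nat \<Rightarrow> complex) set" where
  "PN_disc N \<rho> = {A. psd_on N A \<and> (\<forall>i<N. \<forall>j<N. cmod (A i j) \<le> \<rho>)}"

definition CC :: "(nat \<Rightarrow> real) \<Rightarrow> nat \<Rightarrow> nat \<Rightarrow> real \<Rightarrow> real" where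
  "CC c M N \<rho> = (\<Sum>j<N. real ((M choose j)^2 * ((M - j - 1) choose (N - j - 1))^2)
                         * \<rho> ^ (M - j) / c j)"

end

theory Submission
  imports Defs "HOL-Computational_Algebra.Polynomial"
begin

text \<open>
  A positive semidefinite A splits as
  A = \<zeta>\<zeta>^* + D, where \<zeta> is the normalised k-th column of A and the Schur complement D is positive
  semidefinite with vanishing k-th row and column.

  On the rank-one part, z^M coincides on the entries of \<zeta> with its interpolating polynomial of degree
  < N, whose coefficients are bounded through complete homogeneous symmetric polynomials by the
  binomial terms of C(c; z^M; N, \<rho>); Cauchy-Schwarz then gives x^* f[\<zeta>\<zeta>^*] x \<ge> 0, strictly when the
  entries of \<zeta> are distinct.

  Along the segment \<zeta>\<zeta>^* + tD the derivative of x^* f[\<zeta>\<zeta>^* + tD] x is x^* (D \<circ> f'[\<zeta>\<zeta>^* + tD]) x, which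
  is nonnegative by the Schur product theorem as soon as f' preserves positivity on the N - 1 indices
  where D lives. Since f' has the same shape, with N - 1 terms, exponent M - 1 and a constant still
  controlled by C(c; z^M; N, \<rho>), induction on N closes the argument. Part (2) only needs the diagonal
  entry A_00 \<in> [0, \<rho>] and the estimate C(c; z^M; N, \<rho>) \<ge> \<rho>^M / c_0.
\<close>

section \<open>Positive semidefinite kernels on finite index sets\<close>

definition qform :: "nat set \<Rightarrow> (nat \<Rightarrow> nat \<Rightarrow> complex) \<Rightarrow> (nat \<Rightarrow> complex) \<Rightarrow> complex" where
  "qform I A x = (\<Sum>i\<in>I. \<Sum>j\<in>I. cnj (x i) * A i j * x j)"

definition herm :: "nat set \<Rightarrow> (nat \<Rightarrow> nat \<Rightarrow> complex) \<Rightarrow> bool" where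
  "herm I A \<longleftrightarrow> (\<forall>i\<in>I. \<forall>j\<in>I. A j i = cnj (A i j))"

definition psd :: "nat set \<Rightarrow> (nat \<Rightarrow> nat \<Rightarrow> complex) \<Rightarrow> bool" where
  "psd I A \<longleftrightarrow> herm I A \<and> (\<forall>x. 0 \<le> Re (qform I A x))"

lemma mult_cnj_self: "z * cnj z = complex_of_real ((cmod z)^2)"
  by (simp add: complex_norm_square[symmetric] del: of_real_power)

lemma herm_qform_real:
  assumes "herm I A" shows "Im (qform I A x) = 0"
proof -
  have "cnj (qform I A x) = (\<Sum>i\<in>I. \<Sum>j\<in>I. x i * cnj (A i j) * cnj (x j))"
    by (simp add: qform_def)
  also have "\<dots> = (\<Sum>i\<in>I. \<Sum>j\<in>I. cnj (x j) * A j i * x i)"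
  proof (intro sum.cong refl)
    fix i j assume "i \<in> I" "j \<in> I"
    then have "A j i = cnj (A i j)" using assms unfolding herm_def by blast
    then show "x i * cnj (A i j) * cnj (x j) = cnj (x j) * A j i * x i" by simp
  qed
  also have "\<dots> = qform I A x"
    unfolding qform_def by (rule sum.swap)
  finally have "cnj (qform I A x) = qform I A x" .
  then show ?thesis by (metis cnj.sel(2) neg_equal_zero)
qed

lemma herm_entrywise:
  assumes "herm I A" and "\<And>z. cnj (F z) = F (cnj z)"
  shows "herm I (\<lambda>i j. F (A i j))"
  unfolding herm_def
proof (intro ballI)
  fix i j assume "i \<in> I" "j \<in> I"
  then have "A j i = cnj (A i j)" using assms(1) unfolding herm_def by blast
  then show "F (A j i) = cnj (F (A i j))" by (simp add: assms(2))
qed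

lemma qform_add: "qform I (\<lambda>i j. A i j + B i j) x = qform I A x + qform I B x"
  by (simp add: qform_def algebra_simps sum.distrib)

lemma qform_diff: "qform I (\<lambda>i j. A i j - B i j) x = qform I A x - qform I B x"
  by (simp add: qform_def algebra_simps sum_subtractf)

lemma qform_scale: "qform I (\<lambda>i j. a * A i j) x = a * qform I A x"
  unfolding qform_def sum_distrib_left by (rule sum.cong[OF refl])+ (simp only: ac_simps)

lemma qform_sum: "qform I (\<lambda>i j. \<Sum>k\<in>K. A k i j) x = (\<Sum>k\<in>K. qform I (A k) x)"
proof -
  have "qform I (\<lambda>i j. \<Sum>k\<in>K. A k i j) x = (\<Sum>i\<in>I. \<Sum>j\<in>I. \<Sum>k\<in>K. cnj (x i) * A k i j * x j)"
    unfolding qform_def by (simp add: sum_distrib_left sum_distrib_right)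
  also have "\<dots> = (\<Sum>i\<in>I. \<Sum>k\<in>K. \<Sum>j\<in>I. cnj (x i) * A k i j * x j)"
    by (rule sum.cong[OF refl], rule sum.swap)
  also have "\<dots> = (\<Sum>k\<in>K. qform I (A k) x)"
    unfolding qform_def by (rule sum.swap)
  finally show ?thesis .
qed

lemma qform_rank_one:
  "qform I (\<lambda>i j. u i * cnj (u j)) x = (\<Sum>i\<in>I. cnj (x i) * u i) * cnj (\<Sum>i\<in>I. cnj (x i) * u i)"
  unfolding qform_def by (simp add: sum_product algebra_simps)

lemma qform_rank_one_hadamard:
  "qform I (\<lambda>i j. (u i * cnj (u j)) * Q i j) x = qform I Q (\<lambda>i. cnj (u i) * x i)"
  unfolding qform_def by (intro sum.cong refl) (simp add: algebra_simps)

lemma qform_cong: "(\<And>i. i \<in> I \<Longrightarrow> x i = y i) \<Longrightarrow> qform I D x = qform I D y"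
  unfolding qform_def by simp

lemma qform_remove:
  assumes "finite I" "k \<in> I" "\<forall>j\<in>I. D k j = 0" "\<forall>i\<in>I. D i k = 0"
  shows "qform I D x = qform (I - {k}) D x"
proof -
  have "qform I D x = (\<Sum>i\<in>I - {k}. \<Sum>j\<in>I. cnj (x i) * D i j * x j)"
    unfolding qform_def using assms by (intro sum.mono_neutral_right) auto
  also have "\<dots> = qform (I - {k}) D x"
    unfolding qform_def using assms by (intro sum.cong refl sum.mono_neutral_right) auto
  finally show ?thesis .
qed

lemma qform_delta:
  assumes "finite I" "k \<in> I"
  shows "qform I A (\<lambda>j. if j = k then 1 else 0) = A k k"
proof -
  have "(\<Sum>j\<in>I. cnj (if i = k then 1 else 0) * A i j * (if j = k then 1 else 0))
      = (if i = k then A k k else 0)" for i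
    using assms by (simp add: if_distrib cong: if_cong)
  then show ?thesis unfolding qform_def using assms by simp
qed

lemma qform_two:
  assumes "finite I" "i \<in> I" "k \<in> I" "i \<noteq> k"
  shows "qform I A (\<lambda>j. (if j = i then 1 else 0) + (if j = k then t else 0))
        = A i i + A i k * t + cnj t * A k i + cnj t * A k k * t"
proof -
  define y where "y j = (if j = i then 1 else 0) + (if j = k then t else 0)" for j
  have inner: "(\<Sum>j\<in>I. cnj (y i') * A i' j * y j) = cnj (y i') * (A i' i + A i' k * t)" for i'
  proof -
    have "(\<Sum>j\<in>I. cnj (y i') * A i' j * y j)
        = (\<Sum>j\<in>I. (if j = i then cnj (y i') * A i' j else 0) + (if j = k then cnj (y i') * A i' j * t else 0))"
      using assms by (intro sum.cong) (auto simp: y_def)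
    also have "\<dots> = cnj (y i') * A i' i + cnj (y i') * A i' k * t"
      using assms by (simp add: sum.distrib)
    finally show ?thesis by (simp add: algebra_simps)
  qed
  have "qform I A y = (\<Sum>i'\<in>I. cnj (y i') * (A i' i + A i' k * t))"
    unfolding qform_def using inner by simp
  also have "\<dots> = (\<Sum>i'\<in>I. (if i' = i then A i i + A i k * t else 0)
                         + (if i' = k then cnj t * (A k i + A k k * t) else 0))"
    using assms by (intro sum.cong) (auto simp: y_def)
  also have "\<dots> = A i i + A i k * t + cnj t * A k i + cnj t * A k k * t"
    using assms by (simp add: sum.distrib algebra_simps)
  finally show ?thesis unfolding y_def .
qed

lemma psd_empty: "psd {} A"
  by (simp add: psd_def herm_def qform_def)

lemma psd_rank_one: "psd I (\<lambda>i j. u i * cnj (u j))"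
  unfolding psd_def herm_def qform_rank_one mult_cnj_self by simp

lemma psd_add_scaled:
  assumes "psd I B" "psd I D" "0 \<le> t"
  shows "psd I (\<lambda>i j. B i j + complex_of_real t * D i j)"
proof -
  have "herm I (\<lambda>i j. B i j + complex_of_real t * D i j)"
    unfolding herm_def
  proof (intro ballI)
    fix i j assume "i \<in> I" "j \<in> I"
    then have "B j i = cnj (B i j)" "D j i = cnj (D i j)" using assms unfolding psd_def herm_def by blast+
    then show "B j i + complex_of_real t * D j i = cnj (B i j + complex_of_real t * D i j)" by simp
  qed
  moreover have "Re (qform I (\<lambda>i j. B i j + complex_of_real t * D i j) x) = Re (qform I B x) + t * Re (qform I D x)" for x
    unfolding qform_add qform_scale by simp
  ultimately show ?thesis using assms unfolding psd_def by simp
qed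

lemma psd_subset:
  assumes "psd I A" "J \<subseteq> I" "finite I" shows "psd J A"
proof -
  have "herm J A" using assms unfolding psd_def herm_def by blast
  moreover have "0 \<le> Re (qform J A x)" for x
  proof -
    define y where "y i = (if i \<in> J then x i else 0)" for i
    have "qform I A y = (\<Sum>i\<in>J. \<Sum>j\<in>I. cnj (y i) * A i j * y j)"
      unfolding qform_def using assms by (intro sum.mono_neutral_right) (auto simp: y_def)
    also have "\<dots> = (\<Sum>i\<in>J. \<Sum>j\<in>J. cnj (y i) * A i j * y j)"
      using assms by (intro sum.cong refl sum.mono_neutral_right) (auto simp: y_def)
    also have "\<dots> = qform J A x" unfolding qform_def by (intro sum.cong refl) (auto simp: y_def)
    finally show ?thesis using assms unfolding psd_def by metis
  qed
  ultimately show ?thesis unfolding psd_def by blast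
qed

lemma psd_diag:
  assumes "psd I A" "finite I" "k \<in> I"
  shows "Im (A k k) = 0" "0 \<le> Re (A k k)" "A k k = complex_of_real (Re (A k k))"
proof -
  have "A k k = cnj (A k k)" using assms unfolding psd_def herm_def by blast
  then show im: "Im (A k k) = 0" by (metis cnj.sel(2) neg_equal_zero)
  show "0 \<le> Re (A k k)" using assms qform_delta[of I k A] unfolding psd_def by metis
  show "A k k = complex_of_real (Re (A k k))" using im by (simp add: complex_eq_iff)
qed

text \<open>A vanishing diagonal entry kills its row: test the form on e_i + t e_k with t a large negative
  multiple of cnj (A i k).\<close>
lemma psd_offdiag_zero:
  assumes "psd I A" "finite I" "i \<in> I" "k \<in> I" "Re (A k k) = 0"
  shows "A i k = 0"
proof (rule ccontr)
  assume nz: "A i k \<noteq> 0"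
  have Akk: "A k k = 0" using psd_diag(1)[OF assms(1,2,4)] assms(5) by (simp add: complex_eq_iff)
  then have ik: "i \<noteq> k" using nz by blast
  have Aki: "A k i = cnj (A i k)" using assms unfolding psd_def herm_def by blast
  define m where "m = (cmod (A i k))^2"
  have mpos: "m > 0" using nz by (simp add: m_def)
  define l where "l = (Re (A i i) + 1) / (2 * m)"
  define t where "t = - complex_of_real l * cnj (A i k)"
  have "0 \<le> Re (qform I A (\<lambda>j. (if j = i then 1 else 0) + (if j = k then t else 0)))"
    using assms(1) unfolding psd_def by blast
  also have "qform I A (\<lambda>j. (if j = i then 1 else 0) + (if j = k then t else 0))
      = A i i - 2 * complex_of_real l * (A i k * cnj (A i k))"
    unfolding qform_two[OF assms(2,3,4) ik] t_def Akk Aki by (simp add: algebra_simps)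
  finally have "0 \<le> Re (A i i) - 2 * l * m" unfolding mult_cnj_self m_def by simp
  also have "2 * l * m = Re (A i i) + 1" unfolding l_def using mpos by simp
  finally show False by simp
qed

lemma psd_row_col_zero:
  assumes "psd I A" "finite I" "k \<in> I" "Re (A k k) = 0" "j \<in> I"
  shows "A j k = 0" "A k j = 0"
proof -
  show "A j k = 0" using psd_offdiag_zero[OF assms(1,2,5,3,4)] .
  moreover have "A k j = cnj (A j k)" using assms unfolding psd_def herm_def by blast
  ultimately show "A k j = 0" by simp
qed

lemma psd_on_imp_psd:
  assumes "psd_on N A" shows "psd {..<N} A"
proof -
  have "herm {..<N} A" using assms unfolding psd_on_def hermitian_on_def herm_def by blast
  moreover have "\<forall>x. 0 \<le> Re (qform {..<N} A x)"
    using assms unfolding psd_on_def quad_form_def qform_def by blast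
  ultimately show ?thesis unfolding psd_def by blast
qed

lemma posdef_onI:
  assumes "herm {..<N} A" and "\<And>x. (\<exists>i<N. x i \<noteq> 0) \<Longrightarrow> 0 < Re (qform {..<N} A x)"
  shows "posdef_on N A"
proof -
  have "quad_form N A x = qform {..<N} A x" for x
    unfolding quad_form_def qform_def by simp
  moreover have "hermitian_on N A" using assms(1) unfolding herm_def hermitian_on_def by blast
  ultimately show ?thesis using assms herm_qform_real[OF assms(1)] unfolding posdef_on_def by simp
qed

section \<open>Schur complements and the Schur product theorem\<close>

text \<open>Subtracting the rank-one kernel of pivot_col k A from A gives the Schur complement of the
  pivot A k k. A vanishing pivot forces a vanishing k-th column, so the value 0 is consistent.\<close>
definition pivot_col :: "nat \<Rightarrow> (nat \<Rightarrow> nat \<Rightarrow> complex) \<Rightarrow> nat \<Rightarrow> complex" where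
  "pivot_col k A i = (if Re (A k k) = 0 then 0 else A i k / complex_of_real (sqrt (Re (A k k))))"

lemma schur_complement_zero_row_col:
  assumes "psd I A" "finite I" "k \<in> I" "j \<in> I"
  shows "A k j = pivot_col k A k * cnj (pivot_col k A j)"
    and "A j k = pivot_col k A j * cnj (pivot_col k A k)"
proof -
  define a where "a = Re (A k k)"
  have Akj: "A k j = cnj (A j k)" using assms unfolding psd_def herm_def by blast
  show "A j k = pivot_col k A j * cnj (pivot_col k A k)"
  proof (cases "a = 0")
    case True
    then show ?thesis using psd_row_col_zero(1)[OF assms(1-3) _ assms(4)] unfolding pivot_col_def a_def by simp
  next
    case False
    then have apos: "a > 0" using psd_diag(2)[OF assms(1-3)] a_def by simp
    have Akk: "A k k = complex_of_real a" unfolding a_def by (rule psd_diag(3)[OF assms(1-3)])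
    have "pivot_col k A k = A k k / complex_of_real (sqrt a)"
      using False unfolding pivot_col_def a_def by simp
    also have "\<dots> = complex_of_real (sqrt a)"
      unfolding Akk using apos by (simp add: real_div_sqrt flip: of_real_divide)
    finally have "pivot_col k A k = complex_of_real (sqrt a)" .
    then show ?thesis using False apos unfolding pivot_col_def a_def by simp
  qed
  then show "A k j = pivot_col k A k * cnj (pivot_col k A j)" unfolding Akj by simp
qed

lemma psd_schur_complement:
  assumes "psd I A" "finite I" "k \<in> I"
  shows "psd I (\<lambda>i j. A i j - pivot_col k A i * cnj (pivot_col k A j))"
proof -
  define z where "z = pivot_col k A"
  define D where "D i j = A i j - z i * cnj (z j)" for i j
  have herm: "herm I D" unfolding herm_def
  proof (intro ballI)
    fix i j assume "i \<in> I" "j \<in> I"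
    then have "A j i = cnj (A i j)" using assms(1) unfolding psd_def herm_def by blast
    then show "D j i = cnj (D i j)" unfolding D_def by simp
  qed
  have Dk: "\<forall>j\<in>I. D k j = 0" "\<forall>i\<in>I. D i k = 0"
    using schur_complement_zero_row_col[OF assms] unfolding D_def z_def by simp_all
  have "0 \<le> Re (qform I D x)" for x
  proof -
    text \<open>Change x at k so that x is orthogonal to z; this does not affect the form of D.\<close>
    define S where "S = (\<Sum>i\<in>I - {k}. cnj (x i) * z i)"
    define y where "y = x(k := (if z k = 0 then x k else cnj (- S / z k)))"
    have orth: "(\<Sum>i\<in>I. cnj (y i) * z i) = 0"
    proof (cases "z k = 0")
      case True
      then have "A k k = 0"
        using schur_complement_zero_row_col(1)[OF assms assms(3)] unfolding z_def by simp
      then have "z = (\<lambda>_. 0)" unfolding z_def pivot_col_def by simp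
      then show ?thesis by simp
    next
      case False
      have "(\<Sum>i\<in>I. cnj (y i) * z i) = cnj (y k) * z k + (\<Sum>i\<in>I - {k}. cnj (y i) * z i)"
        using assms(2,3) by (simp add: sum.remove)
      also have "(\<Sum>i\<in>I - {k}. cnj (y i) * z i) = S" unfolding S_def y_def by (intro sum.cong) auto
      finally show ?thesis using False unfolding y_def by simp
    qed
    have "qform I D x = qform (I - {k}) D x" using qform_remove[OF assms(2,3) Dk] .
    also have "\<dots> = qform (I - {k}) D y" by (rule qform_cong) (simp add: y_def)
    also have "\<dots> = qform I D y" using qform_remove[OF assms(2,3) Dk] by simp
    also have "\<dots> = qform I A y - qform I (\<lambda>i j. z i * cnj (z j)) y"
      unfolding D_def by (rule qform_diff)
    also have "qform I (\<lambda>i j. z i * cnj (z j)) y = 0"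
      unfolding qform_rank_one orth by simp
    finally show ?thesis using assms(1) unfolding psd_def by simp
  qed
  then show ?thesis using herm unfolding psd_def D_def z_def by blast
qed

lemma norm_pivot_col_sq_le:
  assumes "psd I A" "finite I" "k \<in> I" "i \<in> I"
  shows "(cmod (pivot_col k A i))^2 \<le> Re (A i i)"
  using psd_diag(2)[OF psd_schur_complement[OF assms(1-3)] assms(2,4)] by (simp add: mult_cnj_self)

lemma psd_hadamard:
  assumes "finite I" "psd I P" "psd I Q"
  shows "psd I (\<lambda>i j. P i j * Q i j)"
  using assms
proof (induction I arbitrary: P rule: finite_psubset_induct)
  case (psubset I)
  show ?case
  proof (cases "I = {}")
    case True then show ?thesis by (simp add: psd_empty)
  next
    case False
    then obtain k where k: "k \<in> I" by blast
    define z where "z = pivot_col k P"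
    define D where "D i j = P i j - z i * cnj (z j)" for i j
    have D: "psd I D" using psd_schur_complement[OF psubset.prems(1) psubset.hyps(1) k]
      unfolding D_def z_def .
    have Dk: "\<forall>j\<in>I. D k j = 0" "\<forall>i\<in>I. D i k = 0"
      using schur_complement_zero_row_col[OF psubset.prems(1) psubset.hyps(1) k] unfolding D_def z_def by simp_all
    have "herm I (\<lambda>i j. P i j * Q i j)" unfolding herm_def
    proof (intro ballI)
      fix i j assume "i \<in> I" "j \<in> I"
      then have "P j i = cnj (P i j)" "Q j i = cnj (Q i j)"
        using psubset.prems unfolding psd_def herm_def by blast+
      then show "P j i * Q j i = cnj (P i j * Q i j)" by simp
    qed
    moreover have IH: "psd (I - {k}) (\<lambda>i j. D i j * Q i j)"
      using psubset.IH[of "I - {k}" D] k psd_subset[OF D _ psubset.hyps(1)]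
        psd_subset[OF psubset.prems(2) _ psubset.hyps(1)] by blast
    have "0 \<le> Re (qform I (\<lambda>i j. P i j * Q i j) x)" for x
    proof -
      have "qform I (\<lambda>i j. P i j * Q i j) x
          = qform I (\<lambda>i j. (z i * cnj (z j)) * Q i j + D i j * Q i j) x"
        unfolding D_def by (simp add: algebra_simps)
      also have "\<dots> = qform I Q (\<lambda>i. cnj (z i) * x i) + qform (I - {k}) (\<lambda>i j. D i j * Q i j) x"
        unfolding qform_add qform_rank_one_hadamard
        using qform_remove[OF psubset.hyps(1) k, of "\<lambda>i j. D i j * Q i j"] Dk by simp
      finally show ?thesis using psubset.prems(2) IH unfolding psd_def by simp
    qed
    ultimately show ?thesis unfolding psd_def by blast
  qed
qed

text \<open>Mean value theorem for t \<mapsto> x^* F[B + tD] x on [0, 1]: its derivative is the form of the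
  Hadamard product D \<circ> F'[B + tD], and D lives on I - {k}.\<close>
lemma qform_entrywise_mono:
  fixes F F' :: "complex \<Rightarrow> complex"
  assumes fin: "finite I" and k: "k \<in> I" and psdD: "psd I D"
    and Dk: "\<forall>j\<in>I. D k j = 0" "\<forall>i\<in>I. D i k = 0"
    and psd_deriv: "\<And>t. 0 \<le> t \<Longrightarrow> t \<le> 1 \<Longrightarrow> psd (I - {k}) (\<lambda>i j. F' (B i j + complex_of_real t * D i j))"
    and deriv: "\<And>z. (F has_field_derivative F' z) (at z)"
  shows "Re (qform I (\<lambda>i j. F (B i j)) x) \<le> Re (qform I (\<lambda>i j. F (B i j + D i j)) x)"
proof -
  define \<Phi> where "\<Phi> w = qform I (\<lambda>i j. F (B i j + w * D i j)) x" for w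
  define \<Phi>' where "\<Phi>' w = qform I (\<lambda>i j. F' (B i j + w * D i j) * D i j) x" for w
  have "(\<Phi> has_field_derivative \<Phi>' w) (at w)" for w
  proof -
    have "((\<lambda>w. \<Sum>i\<in>I. \<Sum>j\<in>I. cnj (x i) * F (B i j + w * D i j) * x j) has_field_derivative
        (\<Sum>i\<in>I. \<Sum>j\<in>I. cnj (x i) * (F' (B i j + w * D i j) * D i j) * x j)) (at w)"
    proof (intro DERIV_sum DERIV_cmult_right DERIV_cmult)
      fix i j
      have "((\<lambda>w. B i j + w * D i j) has_field_derivative D i j) (at w)"
        by (auto intro!: derivative_eq_intros)
      then show "((\<lambda>w. F (B i j + w * D i j)) has_field_derivative F' (B i j + w * D i j) * D i j) (at w)"
        by (rule DERIV_chain2[OF deriv])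
    qed
    then show ?thesis unfolding \<Phi>_def[abs_def] \<Phi>'_def qform_def by (simp add: mult.assoc)
  qed
  then have "((\<lambda>t. Re (\<Phi> (complex_of_real t))) has_real_derivative Re (\<Phi>' (complex_of_real t))) (at t)" for t
    by (rule has_field_derivative_Re[OF has_vector_derivative_real_field])
  then obtain \<xi> where \<xi>: "0 < \<xi>" "\<xi> < 1"
    and mvt: "Re (\<Phi> 1) - Re (\<Phi> 0) = (1 - 0) * Re (\<Phi>' (complex_of_real \<xi>))"
    using MVT2[of 0 1 "\<lambda>t. Re (\<Phi> (complex_of_real t))"] by force
  let ?G = "\<lambda>i j. F' (B i j + complex_of_real \<xi> * D i j)"
  have "psd (I - {k}) (\<lambda>i j. D i j * ?G i j)"
    by (rule psd_hadamard) (use fin psd_subset[OF psdD _ fin] psd_deriv \<xi> in auto)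
  moreover have "\<Phi>' (complex_of_real \<xi>) = qform (I - {k}) (\<lambda>i j. D i j * ?G i j) x"
    unfolding \<Phi>'_def using qform_remove[OF fin k, of "\<lambda>i j. D i j * ?G i j" x] Dk
    by (simp add: mult.commute)
  ultimately have "0 \<le> Re (\<Phi>' (complex_of_real \<xi>))" unfolding psd_def by simp
  then have "Re (\<Phi> 0) \<le> Re (\<Phi> 1)" using mvt by simp
  then show ?thesis unfolding \<Phi>_def by simp
qed

section \<open>Interpolating z^K at given nodes\<close>

fun complete_hom :: "nat \<Rightarrow> complex list \<Rightarrow> complex" where
  "complete_hom 0 xs = 1"
| "complete_hom (Suc k) [] = 0"
| "complete_hom (Suc k) (x # xs) = complete_hom (Suc k) xs + x * complete_hom k (x # xs)"

lemma complete_hom_single: "complete_hom k [z] = z ^ k"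
  by (induction k) auto

lemma complete_hom_swap: "z * complete_hom k (z # S) - w * complete_hom k (w # S) = (z - w) * complete_hom k (z # w # S)"
proof (induction k)
  case 0 then show ?case by simp
next
  case (Suc k)
  define a where "a = complete_hom (Suc k) S"
  define b where "b = complete_hom k (z # S)"
  define c where "c = complete_hom k (w # S)"
  define d where "d = complete_hom k (z # w # S)"
  have IH: "(z - w) * d = z * b - w * c" using Suc.IH unfolding b_def c_def d_def by simp
  have "z * complete_hom (Suc k) (z # S) - w * complete_hom (Suc k) (w # S) = z * (a + z * b) - w * (a + w * c)"
    unfolding a_def b_def c_def by simp
  also have "\<dots> = (z - w) * (a + w * c) + z * (z * b - w * c)" by (simp add: algebra_simps)
  also have "\<dots> = (z - w) * (a + w * c) + z * ((z - w) * d)" unfolding IH ..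
  also have "\<dots> = (z - w) * complete_hom (Suc k) (z # w # S)"
    unfolding a_def c_def d_def by (simp add: algebra_simps)
  finally show ?case .
qed

fun root_poly :: "complex list \<Rightarrow> complex poly" where
  "root_poly [] = 1"
| "root_poly (w # ws) = pCons 0 (root_poly ws) - smult w (root_poly ws)"

lemma poly_root_poly: "poly (root_poly ws) z = (\<Prod>w\<leftarrow>ws. (z - w))"
  by (induction ws) (simp_all add: algebra_simps)

lemma poly_root_poly_zero: "z \<in> set ws \<Longrightarrow> poly (root_poly ws) z = 0"
  by (induction ws) auto

lemma coeff_root_poly_Cons: "coeff (root_poly (w # ws)) j = (if j = 0 then 0 else coeff (root_poly ws) (j - 1)) - w * coeff (root_poly ws) j"
  by (cases j) simp_all

lemma coeff_root_poly_eq_0: "length ws < j \<Longrightarrow> coeff (root_poly ws) j = 0"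
proof (induction ws arbitrary: j)
  case Nil then show ?case by (cases j) auto
next
  case (Cons w ws) then show ?case unfolding coeff_root_poly_Cons by auto
qed

lemma coeff_root_poly_top: "coeff (root_poly ws) (length ws) = 1"
  by (induction ws) (auto simp: coeff_root_poly_Cons coeff_root_poly_eq_0)

lemma norm_coeff_root_poly_le:
  assumes "\<forall>w\<in>set ws. cmod w \<le> s" "0 \<le> s"
  shows "cmod (coeff (root_poly ws) j) \<le> real (length ws choose j) * s ^ (length ws - j)"
  using assms(1)
proof (induction ws arbitrary: j)
  case Nil then show ?case by (cases j) auto
next
  case (Cons w ws)
  define L where "L = length ws"
  have w: "cmod w \<le> s" using Cons.prems by simp
  have IH: "cmod (coeff (root_poly ws) i) \<le> real (L choose i) * s ^ (L - i)" for i
    using Cons.IH Cons.prems unfolding L_def by simp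
  have t2: "cmod (w * coeff (root_poly ws) i) \<le> s * (real (L choose i) * s ^ (L - i))" for i
    unfolding norm_mult by (rule mult_mono[OF w IH]) (auto simp: assms(2))
  show ?case
  proof (cases j)
    case 0
    have "cmod (coeff (root_poly (w # ws)) j) = cmod (w * coeff (root_poly ws) 0)" using 0 by (simp add: coeff_root_poly_Cons)
    also have "\<dots> \<le> s * (real (L choose 0) * s ^ (L - 0))" by (rule t2)
    also have "\<dots> = real (length (w # ws) choose j) * s ^ (length (w # ws) - j)"
      using 0 unfolding L_def by simp
    finally show ?thesis .
  next
    case (Suc i)
    have "cmod (coeff (root_poly (w # ws)) j) = cmod (coeff (root_poly ws) i - w * coeff (root_poly ws) (Suc i))"
      using Suc by (simp add: coeff_root_poly_Cons)
    also have "\<dots> \<le> cmod (coeff (root_poly ws) i) + cmod (w * coeff (root_poly ws) (Suc i))" by (rule norm_triangle_ineq4)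
    also have "\<dots> \<le> real (L choose i) * s ^ (L - i) + s * (real (L choose Suc i) * s ^ (L - Suc i))"
      by (intro add_mono IH t2)
    also have "s * (real (L choose Suc i) * s ^ (L - Suc i)) = real (L choose Suc i) * s ^ (L - i)"
    proof (cases "Suc i \<le> L")
      case True
      then have "L - i = Suc (L - Suc i)" by arith
      then show ?thesis by simp
    next
      case False then show ?thesis by simp
    qed
    also have "real (L choose i) * s ^ (L - i) + real (L choose Suc i) * s ^ (L - i)
        = real (length (w # ws) choose j) * s ^ (length (w # ws) - j)"
      using Suc unfolding L_def by (simp add: algebra_simps)
    finally show ?thesis .
  qed
qed

text \<open>By pow_minus_pow_interp, z^K - pow_interp us K = h_(K-n)(z, us) \<cdot> \<Prod>(w\<in>us) (z - w) with
  n = length us, so pow_interp us K is the polynomial of degree < n interpolating z^K at the nodes us.\<close>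
fun pow_interp :: "complex list \<Rightarrow> nat \<Rightarrow> complex poly" where
  "pow_interp [] K = 0"
| "pow_interp (w # ws) K = pCons 0 (pow_interp ws (K - 1)) + smult (w * complete_hom (K - Suc (length ws)) (w # ws)) (root_poly ws)"

lemma pow_minus_pow_interp:
  "length us \<le> K \<Longrightarrow> z ^ K - poly (pow_interp us K) z = complete_hom (K - length us) (z # us) * poly (root_poly us) z"
proof (induction us arbitrary: K)
  case Nil then show ?case by (simp add: complete_hom_single)
next
  case (Cons w ws)
  then obtain K' where K: "K = Suc K'" by (cases K) auto
  define L where "L = length ws"
  have LK: "L \<le> K'" using Cons.prems K L_def by simp
  have IH: "z ^ K' - poly (pow_interp ws K') z = complete_hom (K' - L) (z # ws) * poly (root_poly ws) z"
    using Cons.IH LK L_def by simp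
  have "z ^ K - poly (pow_interp (w # ws) K) z
      = z * (z ^ K' - poly (pow_interp ws K') z) - w * complete_hom (K' - L) (w # ws) * poly (root_poly ws) z"
    unfolding K L_def by (simp add: algebra_simps)
  also have "\<dots> = (z * complete_hom (K' - L) (z # ws) - w * complete_hom (K' - L) (w # ws)) * poly (root_poly ws) z"
    unfolding IH by (simp add: algebra_simps)
  also have "\<dots> = complete_hom (K - length (w # ws)) (z # w # ws) * poly (root_poly (w # ws)) z"
    unfolding complete_hom_swap K L_def by (simp add: algebra_simps)
  finally show ?case .
qed

lemma poly_pow_interp_node: "length us \<le> K \<Longrightarrow> z \<in> set us \<Longrightarrow> poly (pow_interp us K) z = z ^ K"
  using pow_minus_pow_interp[of us K z] poly_root_poly_zero[of z us] by simp

lemma coeff_pow_interp_Cons: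
  "coeff (pow_interp (w # ws) K) j = (if j = 0 then 0 else coeff (pow_interp ws (K - 1)) (j - 1))
      + w * complete_hom (K - Suc (length ws)) (w # ws) * coeff (root_poly ws) j"
  by (cases j) simp_all

lemma coeff_pow_interp_eq_0: "length us \<le> j \<Longrightarrow> coeff (pow_interp us K) j = 0"
proof (induction us arbitrary: K j)
  case Nil then show ?case by simp
next
  case (Cons w ws)
  then show ?case unfolding coeff_pow_interp_Cons using coeff_root_poly_eq_0[of ws j] by auto
qed

lemma poly_eq_sum_lessThan:
  fixes p :: "complex poly"
  assumes "\<forall>j\<ge>n. coeff p j = 0"
  shows "poly p z = (\<Sum>j<n. coeff p j * z ^ j)"
proof (cases "p = 0")
  case True then show ?thesis by simp
next
  case False
  then have "coeff p (degree p) \<noteq> 0" by simp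
  then have dn: "degree p < n" using assms by (meson not_le)
  have "poly p z = (\<Sum>j\<le>degree p. coeff p j * z ^ j)" by (rule poly_altdef)
  also have "\<dots> = (\<Sum>j<n. coeff p j * z ^ j)"
    using dn by (intro sum.mono_neutral_left) (auto simp: coeff_eq_0)
  finally show ?thesis .
qed

lemma poly_pow_interp_sum: "poly (pow_interp us K) z = (\<Sum>j<length us. coeff (pow_interp us K) j * z ^ j)"
  by (rule poly_eq_sum_lessThan) (simp add: coeff_pow_interp_eq_0)

lemma norm_complete_hom_le:
  assumes "\<forall>x\<in>set xs. cmod x \<le> s" "0 \<le> s"
  shows "cmod (complete_hom k xs) \<le> real ((length xs + k - 1) choose k) * s ^ k"
  using assms(1)
proof (induction k xs rule: complete_hom.induct)
  case (1 xs) then show ?case by simp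
next
  case (2 k) then show ?case using assms(2) by simp
next
  case (3 k x xs)
  have x: "cmod x \<le> s" using "3.prems" by simp
  have I1: "cmod (complete_hom (Suc k) xs) \<le> real ((length xs + Suc k - 1) choose Suc k) * s ^ Suc k"
    using "3.IH"(1) "3.prems" by simp
  have I2: "cmod (complete_hom k (x # xs)) \<le> real ((length (x # xs) + k - 1) choose k) * s ^ k"
    using "3.IH"(2) "3.prems" by simp
  have "cmod (complete_hom (Suc k) (x # xs)) \<le> cmod (complete_hom (Suc k) xs) + cmod x * cmod (complete_hom k (x # xs))"
    by (simp add: norm_triangle_le norm_mult)
  also have "\<dots> \<le> real ((length xs + Suc k - 1) choose Suc k) * s ^ Suc k
      + s * (real ((length (x # xs) + k - 1) choose k) * s ^ k)"
    by (intro add_mono I1 mult_mono x I2) (auto simp: assms(2))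
  also have "\<dots> = real ((length (x # xs) + Suc k - 1) choose Suc k) * s ^ Suc k"
    by (simp add: algebra_simps)
  finally show ?case .
qed



lemma choose_pivot_identity:
  assumes "1 \<le> j" "j < n" "n \<le> K"
  shows "(K - 1 choose (j - 1)) * ((K - j - 1) choose (n - j - 1)) + (K - 1 choose (K - n)) * ((n - 1) choose j)
       = (K choose j) * ((K - j - 1) choose (n - j - 1))"
proof -
  obtain K' where K: "K = Suc K'" using assms by (cases K) auto
  obtain j' where j: "j = Suc j'" using assms by (cases j) auto
  have "(K choose j) = (K' choose j') + (K' choose j)" unfolding K j by simp
  moreover have "(K - 1 choose (K - n)) = (K' choose (n - 1))"
    using assms binomial_symmetric[of "n - 1" K'] unfolding K by simp
  moreover have "(K' choose (n - 1)) * ((n - 1) choose j) = (K' choose j) * ((K' - j) choose (n - 1 - j))"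
    using assms K by (intro choose_mult) auto
  moreover have "K - j - 1 = K' - j" "n - j - 1 = n - 1 - j" using K by auto
  ultimately show ?thesis unfolding K j by (simp add: algebra_simps)
qed

lemma norm_pow_interp_Cons_term_le:
  assumes "\<forall>v\<in>set (w # ws). cmod v \<le> s" "0 \<le> s" "Suc (length ws) \<le> K" "j \<le> length ws"
  shows "cmod (w * complete_hom (K - Suc (length ws)) (w # ws) * coeff (root_poly ws) j)
    \<le> real ((K - 1) choose (K - Suc (length ws))) * real (length ws choose j) * s ^ (K - j)"
proof -
  define L where "L = length ws"
  have hb: "cmod (complete_hom (K - Suc L) (w # ws)) \<le> real ((K - 1) choose (K - Suc L)) * s ^ (K - Suc L)"
    using norm_complete_hom_le[OF assms(1,2), of "K - Suc L"] assms(3) unfolding L_def by simp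
  have pb: "cmod (coeff (root_poly ws) j) \<le> real (L choose j) * s ^ (L - j)"
    using norm_coeff_root_poly_le[of ws s j] assms(1,2) unfolding L_def by simp
  have "cmod (w * complete_hom (K - Suc L) (w # ws) * coeff (root_poly ws) j)
      \<le> s * (real ((K - 1) choose (K - Suc L)) * s ^ (K - Suc L)) * (real (L choose j) * s ^ (L - j))"
    unfolding norm_mult using assms(1,2) by (intro mult_mono hb pb) auto
  also have "\<dots> = real ((K - 1) choose (K - Suc L)) * real (L choose j) * s ^ Suc ((K - Suc L) + (L - j))"
    by (simp add: algebra_simps power_add)
  also have "Suc ((K - Suc L) + (L - j)) = K - j" using assms(3,4) unfolding L_def by arith
  finally show ?thesis unfolding L_def .
qed

lemma norm_coeff_pow_interp_le:
  assumes "\<forall>w\<in>set us. cmod w \<le> s" "0 \<le> s" "length us \<le> K" "j < length us"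
  shows "cmod (coeff (pow_interp us K) j) \<le> real (K choose j) * real ((K - j - 1) choose (length us - j - 1)) * s ^ (K - j)"
  using assms(1,3,4)
proof (induction us arbitrary: K j)
  case Nil then show ?case by simp
next
  case (Cons w ws)
  define L where "L = length ws"
  define n where "n = Suc L"
  have ws: "\<forall>w\<in>set ws. cmod w \<le> s" using Cons.prems by simp
  have nK: "n \<le> K" using Cons.prems unfolding n_def L_def by simp
  have jn: "j < n" using Cons.prems unfolding n_def L_def by simp
  have t2: "cmod (w * complete_hom (K - n) (w # ws) * coeff (root_poly ws) j)
      \<le> real ((K - 1) choose (K - n)) * real (L choose j) * s ^ (K - j)"
    using norm_pow_interp_Cons_term_le[OF Cons.prems(1) assms(2)] nK jn unfolding n_def L_def by simp
  have eq: "coeff (pow_interp (w # ws) K) j = (if j = 0 then 0 else coeff (pow_interp ws (K - 1)) (j - 1))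
      + w * complete_hom (K - n) (w # ws) * coeff (root_poly ws) j"
    unfolding coeff_pow_interp_Cons n_def L_def ..
  show ?case
  proof (cases j)
    case 0
    have "cmod (coeff (pow_interp (w # ws) K) j) \<le> real ((K - 1) choose (K - n)) * real (L choose j) * s ^ (K - j)"
      using t2 unfolding eq using 0 by simp
    also have "real ((K - 1) choose (K - n)) * real (L choose j) = real (K choose j) * real ((K - j - 1) choose (length (w # ws) - j - 1))"
      using 0 nK binomial_symmetric[of "n - 1" "K - 1"] unfolding n_def L_def by simp
    finally show ?thesis .
  next
    case (Suc j')
    have IH: "cmod (coeff (pow_interp ws (K - 1)) j') \<le> real ((K - 1) choose j') * real ((K - 1 - j' - 1) choose (L - j' - 1)) * s ^ (K - 1 - j')"
      using Cons.IH[OF ws, of "K - 1" j'] Cons.prems Suc unfolding L_def by simp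
    have e1: "K - 1 - j' - 1 = K - j - 1" "L - j' - 1 = n - j - 1" "K - 1 - j' = K - j"
      using Suc unfolding n_def by auto
    have IH2: "cmod (coeff (pow_interp ws (K - 1)) j') \<le> real ((K - 1) choose j') * real ((K - j - 1) choose (n - j - 1)) * s ^ (K - j)"
      using IH unfolding e1 .
    have jj: "j - 1 = j'" using Suc by simp
    have "cmod (coeff (pow_interp (w # ws) K) j) \<le> cmod (coeff (pow_interp ws (K - 1)) j') + cmod (w * complete_hom (K - n) (w # ws) * coeff (root_poly ws) j)"
      unfolding eq using Suc by (simp add: norm_triangle_ineq)
    also have "\<dots> \<le> real ((K - 1) choose j') * real ((K - j - 1) choose (n - j - 1)) * s ^ (K - j)
        + real ((K - 1) choose (K - n)) * real (L choose j) * s ^ (K - j)"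
      using IH2 t2 by (rule add_mono)
    also have "\<dots> = real ((K - 1 choose (j - 1)) * ((K - j - 1) choose (n - j - 1)) + (K - 1 choose (K - n)) * ((n - 1) choose j)) * s ^ (K - j)"
      unfolding jj n_def by (simp add: algebra_simps)
    also have "\<dots> = real (K choose j) * real ((K - j - 1) choose (length (w # ws) - j - 1)) * s ^ (K - j)"
    proof -
      have j1: "1 \<le> j" using Suc by simp
      show ?thesis unfolding choose_pivot_identity[OF j1 jn nK] unfolding n_def L_def by simp
    qed
    finally show ?thesis .
  qed
qed

lemma coeff_pow_interp_top:
  "us \<noteq> [] \<Longrightarrow> length us \<le> K \<Longrightarrow> coeff (pow_interp us K) (length us - 1) = complete_hom (K - length us + 1) us"
proof (induction us arbitrary: K)
  case Nil then show ?case by simp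
next
  case (Cons w ws)
  show ?case
  proof (cases "ws = []")
    case True
    then obtain K' where K: "K = Suc K'" using Cons.prems by (cases K) auto
    show ?thesis using True unfolding K by (simp add: complete_hom_single)
  next
    case False
    define L where "L = length ws"
    have L1: "L \<ge> 1" using False unfolding L_def by (cases ws) auto
    have LK: "Suc L \<le> K" using Cons.prems unfolding L_def by simp
    have IH: "coeff (pow_interp ws (K - 1)) (L - 1) = complete_hom (K - 1 - L + 1) ws"
      using Cons.IH[OF False] LK unfolding L_def by simp
    have "coeff (pow_interp (w # ws) K) (length (w # ws) - 1) = coeff (pow_interp (w # ws) K) L" unfolding L_def by simp
    also have "\<dots> = coeff (pow_interp ws (K - 1)) (L - 1) + w * complete_hom (K - Suc L) (w # ws) * coeff (root_poly ws) L"
      unfolding coeff_pow_interp_Cons using L1 unfolding L_def by simp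
    also have "\<dots> = complete_hom (Suc (K - Suc L)) ws + w * complete_hom (K - Suc L) (w # ws)"
      unfolding IH using coeff_root_poly_top[of ws] LK L1 unfolding L_def
      by (simp add: Suc_diff_le)
    also have "\<dots> = complete_hom (Suc (K - Suc L)) (w # ws)" by simp
    also have "Suc (K - Suc L) = K - length (w # ws) + 1" using LK unfolding L_def by simp
    finally show ?thesis .
  qed
qed

lemma norm_add_less_of_ne:
  assumes "x \<noteq> y" "cmod x \<le> s" "cmod y \<le> s"
  shows "cmod (x + y) < 2 * s"
proof -
  have par: "(cmod (x + y))^2 + (cmod (x - y))^2 = 2 * (cmod x)^2 + 2 * (cmod y)^2"
    by (simp only: cmod_power2) (simp add: power2_eq_square algebra_simps)
  have "cmod (x - y) > 0" using assms by simp
  then have "(cmod (x - y))^2 > 0" by simp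
  then have "(cmod (x + y))^2 < 2 * (cmod x)^2 + 2 * (cmod y)^2" using par by linarith
  also have "\<dots> \<le> 2 * s^2 + 2 * s^2"
    using assms by (intro add_mono mult_left_mono power_mono) auto
  also have "\<dots> = (2 * s)^2" by (simp add: power2_eq_square)
  finally have "(cmod (x + y))^2 < (2 * s)^2" .
  moreover have "0 \<le> 2 * s" using assms(2) norm_ge_zero[of x] by linarith
  ultimately show ?thesis using power2_less_imp_less[of "cmod (x+y)" "2 * s"] by blast
qed

lemma norm_complete_hom_less:
  assumes "x \<noteq> y" "cmod x \<le> s" "cmod y \<le> s" "\<forall>z\<in>set rest. cmod z \<le> s" "0 < s" "1 \<le> m"
  shows "cmod (complete_hom m (x # y # rest)) < real ((length rest + 2 + m - 1) choose m) * s ^ m"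
  using assms(6)
proof (induction m rule: dec_induct)
  case base
  have e: "complete_hom 1 (x # y # rest) = complete_hom 1 rest + (x + y)" by (simp add: numeral_eq_Suc)
  have hb: "cmod (complete_hom 1 rest) \<le> real (length rest) * s"
    using norm_complete_hom_le[OF assms(4), of 1] assms(5) by simp
  have "cmod (complete_hom 1 (x # y # rest)) \<le> cmod (complete_hom 1 rest) + cmod (x + y)"
    unfolding e by (rule norm_triangle_ineq)
  also have "\<dots> < real (length rest) * s + 2 * s"
    using hb norm_add_less_of_ne[OF assms(1-3)] by linarith
  also have "\<dots> = real ((length rest + 2 + 1 - 1) choose 1) * s ^ 1" by (simp add: algebra_simps)
  finally show ?case .
next
  case (step m)
  have e: "complete_hom (Suc m) (x # y # rest) = complete_hom (Suc m) (y # rest) + x * complete_hom m (x # y # rest)" by simp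
  have b1: "cmod (complete_hom (Suc m) (y # rest)) \<le> real ((length (y # rest) + Suc m - 1) choose Suc m) * s ^ Suc m"
    by (rule norm_complete_hom_le) (use assms in auto)
  have b2: "cmod (x * complete_hom m (x # y # rest)) < s * (real ((length rest + 2 + m - 1) choose m) * s ^ m)"
  proof -
    have "cmod (x * complete_hom m (x # y # rest)) \<le> s * cmod (complete_hom m (x # y # rest))"
      unfolding norm_mult using assms(2) by (intro mult_right_mono) auto
    also have "\<dots> < s * (real ((length rest + 2 + m - 1) choose m) * s ^ m)"
      using step.IH assms(5) by (intro mult_strict_left_mono) auto
    finally show ?thesis .
  qed
  have "cmod (complete_hom (Suc m) (x # y # rest)) \<le> cmod (complete_hom (Suc m) (y # rest)) + cmod (x * complete_hom m (x # y # rest))"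
    unfolding e by (rule norm_triangle_ineq)
  also have "\<dots> < real ((length (y # rest) + Suc m - 1) choose Suc m) * s ^ Suc m
      + s * (real ((length rest + 2 + m - 1) choose m) * s ^ m)"
    using b1 b2 by linarith
  also have "\<dots> = (real ((length rest + m + 1) choose Suc m) + real ((length rest + m + 1) choose m)) * s ^ Suc m"
    using step.hyps by (simp add: algebra_simps)
  also have "\<dots> = real ((length rest + 2 + Suc m - 1) choose Suc m) * s ^ Suc m"
  proof -
    have "(length rest + 2 + Suc m - 1) = Suc (length rest + m + 1)" by simp
    then show ?thesis by (simp only: binomial_Suc_Suc of_nat_add) (simp add: algebra_simps)
  qed
  finally show ?case .
qed



section \<open>The rank-one case\<close>

definition fpoly :: "(nat \<Rightarrow> real) \<Rightarrow> nat \<Rightarrow> real \<Rightarrow> nat \<Rightarrow> complex \<Rightarrow> complex" where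
  "fpoly c n \<epsilon> M z = (\<Sum>j<n. complex_of_real (c j) * z ^ j) - complex_of_real \<epsilon> * z ^ M"

lemma cnj_fpoly: "cnj (fpoly c n \<epsilon> M z) = fpoly c n \<epsilon> M (cnj z)"
  by (simp add: fpoly_def)

definition moment :: "nat set \<Rightarrow> (nat \<Rightarrow> complex) \<Rightarrow> (nat \<Rightarrow> complex) \<Rightarrow> nat \<Rightarrow> complex" where
  "moment I x u k = (\<Sum>i\<in>I. cnj (x i) * u i ^ k)"

lemma qform_fpoly_rank_one:
  "qform I (\<lambda>i j. fpoly c n \<epsilon> M (u i * cnj (u j))) x =
     complex_of_real ((\<Sum>k<n. c k * (cmod (moment I x u k))^2) - \<epsilon> * (cmod (moment I x u M))^2)"
proof -
  have pw: "(u i * cnj (u j)) ^ k = u i ^ k * cnj (u j ^ k)" for i j k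
    by (simp add: power_mult_distrib)
  have r1: "qform I (\<lambda>i j. u i ^ k * cnj (u j ^ k)) x = complex_of_real ((cmod (moment I x u k))^2)" for k
    unfolding qform_rank_one moment_def by (rule mult_cnj_self)
  have "qform I (\<lambda>i j. fpoly c n \<epsilon> M (u i * cnj (u j))) x
      = qform I (\<lambda>i j. (\<Sum>k<n. complex_of_real (c k) * (u i ^ k * cnj (u j ^ k)))) x
        - qform I (\<lambda>i j. complex_of_real \<epsilon> * (u i ^ M * cnj (u j ^ M))) x"
    unfolding fpoly_def pw by (rule qform_diff)
  also have "\<dots> = (\<Sum>k<n. complex_of_real (c k) * complex_of_real ((cmod (moment I x u k))^2))
        - complex_of_real \<epsilon> * complex_of_real ((cmod (moment I x u M))^2)"
    unfolding qform_sum qform_scale r1 ..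
  finally show ?thesis by simp
qed

lemma moment_pow_interp:
  assumes "u ` I \<subseteq> set us" "length us \<le> M"
  shows "moment I x u M = (\<Sum>j<length us. coeff (pow_interp us M) j * moment I x u j)"
proof -
  have "u i ^ M = (\<Sum>j<length us. coeff (pow_interp us M) j * u i ^ j)" if "i \<in> I" for i
    using poly_pow_interp_node[OF assms(2), of "u i"] poly_pow_interp_sum[of us M "u i"] assms(1) that
    by auto
  then have "moment I x u M = (\<Sum>i\<in>I. \<Sum>j<length us. coeff (pow_interp us M) j * (cnj (x i) * u i ^ j))"
    unfolding moment_def by (intro sum.cong) (auto simp: sum_distrib_left mult.left_commute)
  also have "\<dots> = (\<Sum>j<length us. coeff (pow_interp us M) j * moment I x u j)"
    unfolding moment_def by (subst sum.swap) (simp add: sum_distrib_left)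
  finally show ?thesis .
qed

definition interp_weight :: "(nat \<Rightarrow> real) \<Rightarrow> nat \<Rightarrow> complex list \<Rightarrow> real" where
  "interp_weight c M us = (\<Sum>j<length us. (cmod (coeff (pow_interp us M) j))^2 / c j)"

lemma norm_moment_pow_sq_le:
  assumes "u ` I \<subseteq> set us" "length us \<le> M" "\<forall>j<length us. 0 < c j"
  shows "(cmod (moment I x u M))^2
    \<le> interp_weight c M us * (\<Sum>j<length us. c j * (cmod (moment I x u j))^2)"
proof -
  define n where "n = length us"
  define r where "r j = cmod (coeff (pow_interp us M) j)" for j
  define S where "S j = cmod (moment I x u j)" for j
  have cpos: "\<forall>j<n. 0 < c j" using assms(3) unfolding n_def .
  have "S M \<le> (\<Sum>j<n. r j * S j)"
    unfolding moment_pow_interp[OF assms(1,2)] S_def r_def n_def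
    by (rule order.trans[OF norm_sum]) (simp add: norm_mult)
  also have "\<dots> = (\<Sum>j<n. (r j / sqrt (c j)) * (sqrt (c j) * S j))"
    using cpos by (intro sum.cong) auto
  finally have "(S M)^2 \<le> (\<Sum>j<n. (r j / sqrt (c j)) * (sqrt (c j) * S j))^2"
    by (rule power_mono) (simp add: S_def)
  also have "\<dots> \<le> (\<Sum>j<n. (r j / sqrt (c j))^2) * (\<Sum>j<n. (sqrt (c j) * S j)^2)"
    by (rule Cauchy_Schwarz_ineq_sum)
  also have "(\<Sum>j<n. (r j / sqrt (c j))^2) = interp_weight c M us"
    unfolding interp_weight_def r_def n_def[symmetric] using cpos
    by (intro sum.cong) (auto simp: power_divide)
  also have "(\<Sum>j<n. (sqrt (c j) * S j)^2) = (\<Sum>j<n. c j * (S j)^2)"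
    using cpos by (intro sum.cong) (auto simp: power_mult_distrib)
  finally show ?thesis unfolding S_def n_def .
qed

lemma moment_ne_zero:
  assumes fin: "finite I" and inj: "inj_on u I" and i0: "i0 \<in> I" and x0: "x i0 \<noteq> 0"
  shows "\<exists>j<card I. moment I x u j \<noteq> 0"
proof (rule ccontr)
  assume "\<not> ?thesis"
  then have all0: "\<forall>j<card I. moment I x u j = 0" by blast
  text \<open>Pair the moments with the coefficients of the polynomial vanishing exactly at the other nodes.\<close>
  define L where "L = root_poly (map u (sorted_list_of_set (I - {i0})))"
  have cI: "card I \<ge> 1" using fin i0 by (metis card_0_eq empty_iff less_one not_le)
  have L_zero: "poly L (u i) = 0" if "i \<in> I - {i0}" for i
    unfolding L_def using fin that by (intro poly_root_poly_zero) auto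
  have "poly L (u i0) = (\<Prod>w\<leftarrow>map u (sorted_list_of_set (I - {i0})). u i0 - w)"
    unfolding L_def by (rule poly_root_poly)
  moreover have "u i0 \<notin> u ` (I - {i0})" using inj i0 by (auto simp: inj_on_def)
  ultimately have L_i0: "poly L (u i0) \<noteq> 0" using fin by (auto simp: prod_list_zero_iff)
  have polyL: "poly L z = (\<Sum>j<card I. coeff L j * z ^ j)" for z
    unfolding L_def by (rule poly_eq_sum_lessThan) (use coeff_root_poly_eq_0 fin i0 cI in auto)
  have "0 = (\<Sum>j<card I. coeff L j * moment I x u j)" using all0 by simp
  also have "\<dots> = (\<Sum>i\<in>I. cnj (x i) * poly L (u i))"
    unfolding polyL moment_def
    by (simp add: sum_distrib_left sum_distrib_right mult.left_commute sum.swap[of _ "{..<card I}"])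
  also have "\<dots> = cnj (x i0) * poly L (u i0)"
    using fin i0 L_zero by (simp add: sum.remove)
  finally show False using L_i0 x0 by simp
qed

lemma sqrt_power_sq: "0 \<le> \<rho> \<Longrightarrow> (sqrt \<rho> ^ k)^2 = \<rho> ^ k"
  by (simp add: power2_eq_square flip: power_mult_distrib)

lemma norm_coeff_pow_interp_sq_le:
  assumes "\<forall>w\<in>set us. (cmod w)^2 \<le> \<rho>" "length us \<le> M" "j < length us"
  shows "(cmod (coeff (pow_interp us M) j))^2
    \<le> real ((M choose j)^2 * ((M - j - 1) choose (length us - j - 1))^2) * \<rho> ^ (M - j)"
proof -
  define B where "B = real (M choose j) * real ((M - j - 1) choose (length us - j - 1))"
  have "0 \<le> \<rho>" using assms(1,3) nth_mem[OF assms(3)] by (meson order.trans zero_le_power2)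
  moreover have "\<forall>w\<in>set us. cmod w \<le> sqrt \<rho>" using assms(1) real_le_rsqrt by blast
  ultimately have "cmod (coeff (pow_interp us M) j) \<le> B * sqrt \<rho> ^ (M - j)"
    using norm_coeff_pow_interp_le[of us "sqrt \<rho>" M j] assms(2,3) unfolding B_def by simp
  then have "(cmod (coeff (pow_interp us M) j))^2 \<le> (B * sqrt \<rho> ^ (M - j))^2"
    by (rule power_mono) simp
  also have "\<dots> = B^2 * \<rho> ^ (M - j)"
    unfolding power_mult_distrib sqrt_power_sq[OF \<open>0 \<le> \<rho>\<close>] ..
  finally show ?thesis unfolding B_def by (simp add: power_mult_distrib)
qed

text \<open>The top coefficient is h_(M-n+1)(us), which stays strictly below its worst-case bound as soon
  as two nodes differ.\<close>
lemma norm_coeff_pow_interp_top_sq_less: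
  assumes ub: "\<forall>w\<in>set us. (cmod w)^2 \<le> \<rho>" and rho: "0 < \<rho>" and dist: "distinct us"
    and n2: "2 \<le> length us" and nM: "length us \<le> M"
  shows "(cmod (coeff (pow_interp us M) (length us - 1)))^2
    < real ((M choose (length us - 1))^2) * \<rho> ^ (M - (length us - 1))"
proof -
  define n where "n = length us"
  define s where "s = sqrt \<rho>"
  have s0: "0 < s" unfolding s_def using rho by simp
  have ubs: "\<forall>w\<in>set us. cmod w \<le> s" unfolding s_def using ub real_le_rsqrt by blast
  obtain a b rest where abr: "us = a # b # rest" using n2
    by (metis One_nat_def Suc_1 Suc_le_length_iff)
  have e1: "length rest + 2 + (M - n + 1) - 1 = M" and e3: "M - n + 1 = M - (n - 1)"
    using abr nM n2 unfolding n_def by auto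
  have e2: "M choose (M - n + 1) = M choose (n - 1)"
    using binomial_symmetric[of "n - 1" M] nM n2 unfolding n_def by (simp add: Suc_diff_le)
  have "coeff (pow_interp us M) (n - 1) = complete_hom (M - n + 1) (a # b # rest)"
    using coeff_pow_interp_top[of us M] abr nM unfolding n_def by simp
  moreover have "cmod (complete_hom (M - n + 1) (a # b # rest))
      < real ((length rest + 2 + (M - n + 1) - 1) choose (M - n + 1)) * s ^ (M - n + 1)"
    by (rule norm_complete_hom_less) (use ubs abr dist s0 in auto)
  ultimately have "cmod (coeff (pow_interp us M) (n - 1))
      < real ((length rest + 2 + (M - n + 1) - 1) choose (M - n + 1)) * s ^ (M - n + 1)"
    by simp
  then have "cmod (coeff (pow_interp us M) (n - 1)) < real (M choose (n - 1)) * s ^ (M - (n - 1))"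
    unfolding e1 unfolding e2 unfolding e3 .
  then have "(cmod (coeff (pow_interp us M) (n - 1)))^2 < (real (M choose (n - 1)) * s ^ (M - (n - 1)))^2"
    by (rule power_strict_mono) auto
  also have "\<dots> = real ((M choose (n - 1))^2) * \<rho> ^ (M - (n - 1))"
    unfolding s_def power_mult_distrib sqrt_power_sq[OF less_imp_le[OF rho]] by simp
  finally show ?thesis unfolding n_def .
qed

lemma interp_weight_le_CC:
  assumes "\<forall>w\<in>set us. (cmod w)^2 \<le> \<rho>" "length us \<le> M" "\<forall>j<length us. 0 < c j"
  shows "interp_weight c M us \<le> CC c M (length us) \<rho>"
  unfolding interp_weight_def CC_def
  using assms norm_coeff_pow_interp_sq_le[OF assms(1,2)] by (intro sum_mono divide_right_mono) auto

lemma interp_weight_less_CC: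
  assumes "\<forall>w\<in>set us. (cmod w)^2 \<le> \<rho>" "0 < \<rho>" "distinct us" "2 \<le> length us" "length us \<le> M"
    and "\<forall>j<length us. 0 < c j"
  shows "interp_weight c M us < CC c M (length us) \<rho>"
  unfolding interp_weight_def CC_def
proof (rule sum_strict_mono_ex1)
  show "\<forall>j\<in>{..<length us}. (cmod (coeff (pow_interp us M) j))^2 / c j
      \<le> real ((M choose j)^2 * ((M - j - 1) choose (length us - j - 1))^2) * \<rho> ^ (M - j) / c j"
    using assms norm_coeff_pow_interp_sq_le[OF assms(1,5)] by (intro ballI divide_right_mono) auto
  have "length us - 1 < length us" using assms(4) by simp
  moreover have "M - (length us - 1) - 1 = M - length us" "length us - (length us - 1) - 1 = 0"
    using assms(4) by auto
  ultimately show "\<exists>j\<in>{..<length us}. (cmod (coeff (pow_interp us M) j))^2 / c j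
      < real ((M choose j)^2 * ((M - j - 1) choose (length us - j - 1))^2) * \<rho> ^ (M - j) / c j"
    using norm_coeff_pow_interp_top_sq_less[OF assms(1-5)] assms(6)
    by (intro bexI[of _ "length us - 1"] divide_strict_right_mono) auto
qed (simp)

lemma qform_fpoly_rank_one_ge:
  assumes "finite I" "card I \<le> M" "\<forall>j<card I. 0 < c j" "0 \<le> \<epsilon>"
  shows "(1 - \<epsilon> * interp_weight c M (map u (sorted_list_of_set I))) * (\<Sum>j<card I. c j * (cmod (moment I x u j))^2)
    \<le> Re (qform I (\<lambda>i j. fpoly c (card I) \<epsilon> M (u i * cnj (u j))) x)"
proof -
  define us where "us = map u (sorted_list_of_set I)"
  define Y where "Y = (\<Sum>j<card I. c j * (cmod (moment I x u j))^2)"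
  have len: "length us = card I" and set_us: "u ` I \<subseteq> set us" unfolding us_def using assms(1) by auto
  have "(cmod (moment I x u M))^2 \<le> interp_weight c M us * Y"
    using norm_moment_pow_sq_le[OF set_us] assms(2,3) unfolding len Y_def by simp
  then have "\<epsilon> * (cmod (moment I x u M))^2 \<le> \<epsilon> * (interp_weight c M us * Y)"
    using assms(4) by (rule mult_left_mono)
  then show ?thesis unfolding qform_fpoly_rank_one us_def[symmetric] Y_def[symmetric]
    by (simp add: algebra_simps)
qed

lemma psd_fpoly_rank_one:
  assumes "finite I" "card I \<le> M" "\<forall>j<card I. 0 < c j" "\<forall>i\<in>I. (cmod (u i))^2 \<le> \<rho>"
    and "0 \<le> \<epsilon>" "\<epsilon> * CC c M (card I) \<rho> \<le> 1"
  shows "psd I (\<lambda>i j. fpoly c (card I) \<epsilon> M (u i * cnj (u j)))"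
proof -
  define us where "us = map u (sorted_list_of_set I)"
  have len: "length us = card I" and "set us = u ` I" unfolding us_def using assms(1) by auto
  then have "interp_weight c M us \<le> CC c M (card I) \<rho>"
    using interp_weight_le_CC[of us \<rho> M c] assms(2-4) by auto
  then have "\<epsilon> * interp_weight c M us \<le> 1" using assms(5,6) by (meson mult_left_mono order.trans)
  then have "0 \<le> (1 - \<epsilon> * interp_weight c M us) * (\<Sum>j<card I. c j * (cmod (moment I x u j))^2)" for x
    using assms(3) by (intro mult_nonneg_nonneg sum_nonneg) auto
  then have "0 \<le> Re (qform I (\<lambda>i j. fpoly c (card I) \<epsilon> M (u i * cnj (u j))) x)" for x
    using qform_fpoly_rank_one_ge[OF assms(1-3,5), of u x] unfolding us_def by (rule order.trans)
  moreover have "herm I (\<lambda>i j. fpoly c (card I) \<epsilon> M (u i * cnj (u j)))"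
    using psd_rank_one[of I u] unfolding psd_def
    by (intro herm_entrywise[where F = "fpoly c (card I) \<epsilon> M"] cnj_fpoly) blast
  ultimately show ?thesis unfolding psd_def by blast
qed

lemma qform_fpoly_rank_one_pos:
  assumes fin: "finite I" and "2 \<le> card I" "card I \<le> M" "0 < \<rho>" "\<forall>j<card I. 0 < c j"
    and ub: "\<forall>i\<in>I. (cmod (u i))^2 \<le> \<rho>" and eps: "0 \<le> \<epsilon>" "\<epsilon> * CC c M (card I) \<rho> \<le> 1"
    and inj: "inj_on u I" and "i0 \<in> I" "x i0 \<noteq> 0"
  shows "0 < Re (qform I (\<lambda>i j. fpoly c (card I) \<epsilon> M (u i * cnj (u j))) x)"
proof -
  define us where "us = map u (sorted_list_of_set I)"
  have len: "length us = card I" and "set us = u ` I" and "distinct us"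
    unfolding us_def using fin inj by (auto simp: distinct_map)
  then have "interp_weight c M us < CC c M (card I) \<rho>"
    using interp_weight_less_CC[of us \<rho> M c] assms(2-5) ub by auto
  then have "\<epsilon> * interp_weight c M us < 1"
  proof (cases "\<epsilon> = 0")
    case False
    then have "\<epsilon> * interp_weight c M us < \<epsilon> * CC c M (card I) \<rho>"
      using eps(1) \<open>interp_weight c M us < CC c M (card I) \<rho>\<close> by simp
    then show ?thesis using eps(2) by linarith
  qed simp
  moreover obtain j where "j < card I" "moment I x u j \<noteq> 0"
    using moment_ne_zero[of I u i0 x] fin inj assms(10,11) by blast
  then have "0 < (\<Sum>j<card I. c j * (cmod (moment I x u j))^2)"
    using assms(5) by (intro sum_pos2[of _ j]) auto
  ultimately have "0 < (1 - \<epsilon> * interp_weight c M us) * (\<Sum>j<card I. c j * (cmod (moment I x u j))^2)"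
    by simp
  then show ?thesis
    using qform_fpoly_rank_one_ge[OF fin assms(3,5) eps(1), of u x] unfolding us_def
    by (rule order.strict_trans2)
qed

section \<open>Induction on the number of indices\<close>

definition deriv_coeffs :: "(nat \<Rightarrow> real) \<Rightarrow> nat \<Rightarrow> real" where
  "deriv_coeffs c j = real (Suc j) * c (Suc j)"

lemma fpoly_has_field_derivative:
  "(fpoly c n \<epsilon> M has_field_derivative fpoly (deriv_coeffs c) (n - 1) (real M * \<epsilon>) (M - 1) z) (at z)"
proof -
  have d: "(fpoly c n \<epsilon> M has_field_derivative
      (\<Sum>j<n. complex_of_real (c j) * (of_nat j * z ^ (j - 1))) - complex_of_real \<epsilon> * (of_nat M * z ^ (M - 1))) (at z)"
    unfolding fpoly_def[abs_def]
    by (auto intro!: derivative_eq_intros DERIV_sum sum.cong simp: ac_simps)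
  have "(\<Sum>j<n. complex_of_real (c j) * (of_nat j * z ^ (j - 1)))
      = (\<Sum>j<n - 1. complex_of_real (deriv_coeffs c j) * z ^ j)"
  proof (cases n)
    case (Suc n')
    show ?thesis unfolding Suc sum.lessThan_Suc_shift deriv_coeffs_def by (simp add: algebra_simps)
  qed simp
  then show ?thesis using d unfolding fpoly_def by (simp add: algebra_simps)
qed

text \<open>The key estimate making the induction work: the constant for the derivative, with one fewer term
  and exponent M - 1, is at most 1/M times the original one. Termwise this is
  M \<cdot> (M-1 choose j) = (j+1) \<cdot> (M choose j+1) together with (M-1 choose j) \<le> (M choose j+1).\<close>
lemma CC_deriv_coeffs_le:
  assumes cpos: "\<forall>j<Suc n. 0 < c j" and nM: "Suc n \<le> M" and rho: "0 \<le> \<rho>"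
  shows "real M * CC (deriv_coeffs c) (M - 1) n \<rho> \<le> CC c M (Suc n) \<rho>"
proof -
  define T where "T j = real ((M choose j)^2 * ((M - j - 1) choose (Suc n - j - 1))^2) * \<rho> ^ (M - j) / c j" for j
  obtain M' where M': "M = Suc M'" using nM by (cases M) auto
  have "real M * CC (deriv_coeffs c) (M - 1) n \<rho>
      = (\<Sum>j<n. real M * (real ((M' choose j)^2 * ((M' - j - 1) choose (n - j - 1))^2) * \<rho> ^ (M' - j)
                            / (real (Suc j) * c (Suc j))))"
    unfolding CC_def deriv_coeffs_def M' by (simp add: sum_distrib_left)
  also have "\<dots> \<le> (\<Sum>j<n. T (Suc j))"
  proof (rule sum_mono)
    fix j assume "j \<in> {..<n}"
    then have jn: "j < n" by simp
    define b where "b = real (M' choose j)"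
    define B where "B = real (M choose Suc j)"
    define P where "P = real (((M' - j - 1) choose (n - j - 1))^2) * \<rho> ^ (M' - j) / c (Suc j)"
    have "0 < c (Suc j)" using cpos jn by simp
    then have P0: "0 \<le> P" unfolding P_def using rho by simp
    have id: "real M * b = real (Suc j) * B"
      unfolding b_def B_def M' using arg_cong[OF Suc_times_binomial_eq[of M' j], of real]
      by (simp only: of_nat_mult mult.commute)
    have "real (Suc j) * b \<le> real M * b" using jn nM unfolding b_def by (intro mult_right_mono) auto
    then have bB: "b \<le> B" unfolding id by simp
    have "real M * (real ((M' choose j)^2 * ((M' - j - 1) choose (n - j - 1))^2) * \<rho> ^ (M' - j)
            / (real (Suc j) * c (Suc j)))
        = (real M * b) * b / real (Suc j) * P"
      unfolding b_def P_def by (simp add: power2_eq_square divide_inverse ac_simps)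
    also have "\<dots> = B * b * P" unfolding id by simp
    also have "\<dots> \<le> B * B * P" using bB P0 unfolding B_def by (intro mult_right_mono mult_left_mono) auto
    also have "\<dots> = T (Suc j)" unfolding T_def B_def P_def M' by (simp add: power2_eq_square)
    finally show "real M * (real ((M' choose j)^2 * ((M' - j - 1) choose (n - j - 1))^2) * \<rho> ^ (M' - j)
            / (real (Suc j) * c (Suc j))) \<le> T (Suc j)" .
  qed
  also have "\<dots> \<le> T 0 + (\<Sum>j<n. T (Suc j))"
    using cpos[rule_format, of 0] rho unfolding T_def by simp
  also have "\<dots> = CC c M (Suc n) \<rho>" unfolding CC_def T_def by (simp only: sum.lessThan_Suc_shift)
  finally show ?thesis .
qed

lemma fpoly_deriv_admissible:
  assumes "\<forall>j<Suc n. 0 < c j" "Suc n \<le> M" "0 \<le> \<rho>" "0 \<le> \<epsilon>" "\<epsilon> * CC c M (Suc n) \<rho> \<le> 1"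
  shows "\<forall>j<n. 0 < deriv_coeffs c j" "n \<le> M - 1" "0 \<le> real M * \<epsilon>"
    "real M * \<epsilon> * CC (deriv_coeffs c) (M - 1) n \<rho> \<le> 1"
proof -
  show "\<forall>j<n. 0 < deriv_coeffs c j" "n \<le> M - 1" "0 \<le> real M * \<epsilon>"
    using assms by (auto simp: deriv_coeffs_def)
  have "\<epsilon> * (real M * CC (deriv_coeffs c) (M - 1) n \<rho>) \<le> \<epsilon> * CC c M (Suc n) \<rho>"
    using CC_deriv_coeffs_le[OF assms(1-3)] assms(4) by (rule mult_left_mono)
  then show "real M * \<epsilon> * CC (deriv_coeffs c) (M - 1) n \<rho> \<le> 1" using assms(5) by (simp add: ac_simps)
qed

lemma norm_pivot_col_sq_le_bound:
  assumes "psd I A" "finite I" "k \<in> I" "\<forall>i\<in>I. \<forall>j\<in>I. cmod (A i j) \<le> \<rho>"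
  shows "\<forall>i\<in>I. (cmod (pivot_col k A i))^2 \<le> \<rho>"
  using norm_pivot_col_sq_le[OF assms(1-3)] complex_Re_le_cmod assms(4) by (meson order.trans)

lemma norm_mult_cnj_le:
  assumes "(cmod a)^2 \<le> \<rho>" "(cmod b)^2 \<le> \<rho>"
  shows "cmod (a * cnj b) \<le> \<rho>"
proof -
  have "0 \<le> \<rho>" using assms(1) zero_le_power2 order.trans by blast
  have "(cmod (a * cnj b))^2 = (cmod a)^2 * (cmod b)^2" by (simp add: norm_mult power_mult_distrib)
  also have "\<dots> \<le> \<rho> * \<rho>" using assms \<open>0 \<le> \<rho>\<close> by (intro mult_mono) auto
  finally have "(cmod (a * cnj b))^2 \<le> \<rho>^2" by (simp add: power2_eq_square)
  moreover note \<open>0 \<le> \<rho>\<close>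
  ultimately show ?thesis by (rule power2_le_imp_le)
qed

lemma norm_segment_le:
  assumes "cmod u \<le> \<rho>" "cmod v \<le> \<rho>" "0 \<le> t" "t \<le> 1"
  shows "cmod (u + complex_of_real t * (v - u)) \<le> \<rho>"
proof -
  have "u + complex_of_real t * (v - u) = complex_of_real (1 - t) * u + complex_of_real t * v"
    by (simp add: algebra_simps)
  also have "cmod \<dots> \<le> cmod (complex_of_real (1 - t) * u) + cmod (complex_of_real t * v)"
    by (rule norm_triangle_ineq)
  also have "\<dots> = (1 - t) * cmod u + t * cmod v"
    unfolding norm_mult norm_of_real using assms(3,4) by simp
  also have "\<dots> \<le> (1 - t) * \<rho> + t * \<rho>"
    using assms by (intro add_mono mult_left_mono) auto
  finally show ?thesis by (simp add: algebra_simps)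
qed

text \<open>The hypothesis on F' is used along the segment from the rank-one part B of A to A, i.e. at
  B + t(A - B), whose entries are bounded by \<rho> since those of B and A are.\<close>
lemma qform_entrywise_pivot_le:
  fixes F F' :: "complex \<Rightarrow> complex"
  assumes fin: "finite I" and k: "k \<in> I" and psdA: "psd I A"
    and Ab: "\<forall>i\<in>I. \<forall>j\<in>I. cmod (A i j) \<le> \<rho>"
    and deriv_psd: "\<And>C. psd (I - {k}) C \<Longrightarrow> \<forall>i\<in>I - {k}. \<forall>j\<in>I - {k}. cmod (C i j) \<le> \<rho>
                          \<Longrightarrow> psd (I - {k}) (\<lambda>i j. F' (C i j))"
    and deriv: "\<And>z. (F has_field_derivative F' z) (at z)"
  shows "Re (qform I (\<lambda>i j. F (pivot_col k A i * cnj (pivot_col k A j))) x)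
    \<le> Re (qform I (\<lambda>i j. F (A i j)) x)"
proof -
  define B where "B i j = pivot_col k A i * cnj (pivot_col k A j)" for i j
  define D where "D i j = A i j - B i j" for i j
  have psdD: "psd I D" using psd_schur_complement[OF psdA fin k] unfolding D_def B_def .
  have Dk: "\<forall>j\<in>I. D k j = 0" "\<forall>i\<in>I. D i k = 0"
    using schur_complement_zero_row_col[OF psdA fin k] unfolding D_def B_def by simp_all
  have Bb: "cmod (B i j) \<le> \<rho>" if "i \<in> I" "j \<in> I" for i j
    using norm_pivot_col_sq_le_bound[OF psdA fin k Ab] that unfolding B_def by (simp add: norm_mult_cnj_le)
  have "psd (I - {k}) (\<lambda>i j. F' (B i j + complex_of_real t * D i j))" if t: "0 \<le> t" "t \<le> 1" for t
  proof (rule deriv_psd)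
    show "psd (I - {k}) (\<lambda>i j. B i j + complex_of_real t * D i j)"
      using psd_add_scaled[OF psd_rank_one psdD t(1)] psd_subset[of I _ "I - {k}"] fin
      unfolding B_def by blast
    show "\<forall>i\<in>I - {k}. \<forall>j\<in>I - {k}. cmod (B i j + complex_of_real t * D i j) \<le> \<rho>"
      using norm_segment_le[OF Bb _ t] Ab unfolding D_def by simp
  qed
  from qform_entrywise_mono[OF fin k psdD Dk this deriv]
  show ?thesis unfolding D_def B_def by simp
qed

lemma psd_fpoly:
  assumes "finite I" "card I \<le> M" "0 < \<rho>" "\<forall>j<card I. 0 < c j"
    and "0 \<le> \<epsilon>" "\<epsilon> * CC c M (card I) \<rho> \<le> 1"
    and "psd I A" "\<forall>i\<in>I. \<forall>j\<in>I. cmod (A i j) \<le> \<rho>"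
  shows "psd I (\<lambda>i j. fpoly c (card I) \<epsilon> M (A i j))"
  using assms
proof (induction "card I" arbitrary: I M c \<epsilon> A)
  case 0
  then show ?case by (simp add: psd_empty)
next
  case (Suc n)
  obtain k where k: "k \<in> I" using Suc.hyps(2) by (metis card.empty ex_in_conv nat.distinct(1))
  have card_k: "card (I - {k}) = n" using Suc.hyps(2) Suc.prems(1) k by simp
  note adm = fpoly_deriv_admissible[of n c M \<rho> \<epsilon>, unfolded Suc.hyps(2)[symmetric]]
  have "Re (qform I (\<lambda>i j. fpoly c (card I) \<epsilon> M (pivot_col k A i * cnj (pivot_col k A j))) x)
      \<le> Re (qform I (\<lambda>i j. fpoly c (card I) \<epsilon> M (A i j)) x)" for x
  proof (rule qform_entrywise_pivot_le[OF Suc.prems(1) k Suc.prems(7,8)])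
    show "psd (I - {k}) (\<lambda>i j. fpoly (deriv_coeffs c) (card I - 1) (real M * \<epsilon>) (M - 1) (C i j))"
      if "psd (I - {k}) C" "\<forall>i\<in>I - {k}. \<forall>j\<in>I - {k}. cmod (C i j) \<le> \<rho>" for C
      using Suc.hyps(1)[of "I - {k}" "M - 1" "deriv_coeffs c" "real M * \<epsilon>" C] Suc.prems(1-6)
        Suc.hyps(2)[symmetric] adm card_k that by simp
  qed (rule fpoly_has_field_derivative)
  moreover have "0 \<le> Re (qform I (\<lambda>i j. fpoly c (card I) \<epsilon> M (pivot_col k A i * cnj (pivot_col k A j))) x)" for x
    using psd_fpoly_rank_one[OF Suc.prems(1,2,4) norm_pivot_col_sq_le_bound[OF Suc.prems(7,1) k Suc.prems(8)]
        Suc.prems(5,6)]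
    unfolding psd_def by blast
  moreover have "herm I (\<lambda>i j. fpoly c (card I) \<epsilon> M (A i j))"
    using Suc.prems(7) unfolding psd_def by (intro herm_entrywise[where F = "fpoly c (card I) \<epsilon> M"] cnj_fpoly) blast
  ultimately show ?case unfolding psd_def by (meson order.trans)
qed

lemma psd_pivot_nonzero:
  assumes psdA: "psd I A" and fin: "finite I" and k: "k \<in> I" and "2 \<le> card I"
    and inj: "inj_on (\<lambda>j. A k j) I \<or> inj_on (\<lambda>j. A j k) I"
  shows "Re (A k k) \<noteq> 0"
proof
  assume a0: "Re (A k k) = 0"
  have "card (I - {k}) \<noteq> 0" using assms(4) fin k by simp
  then obtain j where "j \<in> I - {k}" by (metis card.empty ex_in_conv)
  then have j: "j \<in> I" "j \<noteq> k" by auto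
  have "A k k = A k j" "A k k = A j k"
    using psd_row_col_zero[OF psdA fin k a0] j k by simp_all
  then show False using inj j k unfolding inj_on_def by metis
qed

lemma inj_on_pivot_col:
  assumes psdA: "psd I A" and fin: "finite I" and k: "k \<in> I" and a0: "Re (A k k) \<noteq> 0"
    and inj: "inj_on (\<lambda>j. A k j) I \<or> inj_on (\<lambda>j. A j k) I"
  shows "inj_on (pivot_col k A) I"
proof (rule inj_onI)
  fix j1 j2 assume j: "j1 \<in> I" "j2 \<in> I" and eq: "pivot_col k A j1 = pivot_col k A j2"
  have "complex_of_real (sqrt (Re (A k k))) \<noteq> 0" using a0 psd_diag(2)[OF psdA fin k] by simp
  then have col: "A j1 k = A j2 k" using eq a0 unfolding pivot_col_def by simp
  have "A k j1 = cnj (A j1 k)" "A k j2 = cnj (A j2 k)" using psdA j k unfolding psd_def herm_def by blast+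
  then have "A k j1 = A k j2" using col by simp
  then show "j1 = j2" using inj col j unfolding inj_on_def by blast
qed

lemma qform_fpoly_pos:
  assumes fin: "finite I" and card2: "2 \<le> card I" and "card I \<le> M" "0 < \<rho>" "\<forall>j<card I. 0 < c j"
    and eps: "0 \<le> \<epsilon>" "\<epsilon> * CC c M (card I) \<rho> \<le> 1"
    and psdA: "psd I A" and Ab: "\<forall>i\<in>I. \<forall>j\<in>I. cmod (A i j) \<le> \<rho>" and k: "k \<in> I"
    and inj: "inj_on (\<lambda>j. A k j) I \<or> inj_on (\<lambda>j. A j k) I" and "i0 \<in> I" "x i0 \<noteq> 0"
  shows "0 < Re (qform I (\<lambda>i j. fpoly c (card I) \<epsilon> M (A i j)) x)"
proof -
  obtain n where n: "card I = Suc n" using card2 by (cases "card I") auto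
  note adm = fpoly_deriv_admissible[of n c M \<rho> \<epsilon>, unfolded n[symmetric]]
  have "0 < Re (qform I (\<lambda>i j. fpoly c (card I) \<epsilon> M (pivot_col k A i * cnj (pivot_col k A j))) x)"
    using qform_fpoly_rank_one_pos[where x = x, OF fin card2 assms(3-5) norm_pivot_col_sq_le_bound[OF psdA fin k Ab] eps
        inj_on_pivot_col[OF psdA fin k psd_pivot_nonzero[OF psdA fin k card2 inj] inj] assms(12,13)] .
  also have "\<dots> \<le> Re (qform I (\<lambda>i j. fpoly c (card I) \<epsilon> M (A i j)) x)"
  proof (rule qform_entrywise_pivot_le[OF fin k psdA Ab])
    show "psd (I - {k}) (\<lambda>i j. fpoly (deriv_coeffs c) (card I - 1) (real M * \<epsilon>) (M - 1) (C i j))"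
      if "psd (I - {k}) C" "\<forall>i\<in>I - {k}. \<forall>j\<in>I - {k}. cmod (C i j) \<le> \<rho>" for C
      using psd_fpoly[of "I - {k}" "M - 1" \<rho> "deriv_coeffs c" "real M * \<epsilon>" C] fin k n
        assms(3-5) eps adm that by simp
  qed (rule fpoly_has_field_derivative)
  finally show ?thesis .
qed

lemma posdef_on_fpoly:
  assumes "1 < N" "N \<le> M" "0 < \<rho>" "\<forall>j<N. 0 < c j" "0 \<le> \<epsilon>" "\<epsilon> * CC c M N \<rho> \<le> 1"
    and A: "A \<in> PN_disc N \<rho>" and ex: "\<exists>k<N. inj_on (\<lambda>j. A k j) {..<N} \<or> inj_on (\<lambda>j. A j k) {..<N}"
  shows "posdef_on N (\<lambda>i j. fpoly c N \<epsilon> M (A i j))"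
proof (rule posdef_onI)
  obtain k where "k < N" "inj_on (\<lambda>j. A k j) {..<N} \<or> inj_on (\<lambda>j. A j k) {..<N}" using ex by blast
  have psdA: "psd {..<N} A" and Ab: "\<forall>i\<in>{..<N}. \<forall>j\<in>{..<N}. cmod (A i j) \<le> \<rho>"
    using A unfolding PN_disc_def by (auto intro: psd_on_imp_psd)
  then show "herm {..<N} (\<lambda>i j. fpoly c N \<epsilon> M (A i j))"
    unfolding psd_def by (intro herm_entrywise[where F = "fpoly c N \<epsilon> M"] cnj_fpoly) blast
  show "0 < Re (qform {..<N} (\<lambda>i j. fpoly c N \<epsilon> M (A i j)) x)" if "\<exists>i<N. x i \<noteq> 0" for x
    using that qform_fpoly_pos[of "{..<N}" M \<rho> c \<epsilon> A k] assms psdA Ab \<open>k < N\<close> \<open>inj_on _ _ \<or> _\<close> by auto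
qed

lemma CC_ge_first_term:
  assumes "1 \<le> N" "N \<le> M" "0 \<le> \<rho>" "\<forall>j<N. 0 < c j"
  shows "\<rho> ^ M / c 0 \<le> CC c M N \<rho>"
proof -
  define T where "T j = real ((M choose j)^2 * ((M - j - 1) choose (N - j - 1))^2) * \<rho> ^ (M - j) / c j" for j
  have c0: "0 < c 0" using assms by simp
  have "1 \<le> (M - 1) choose (N - 1)" using zero_less_binomial[of "N - 1" "M - 1"] assms(2) by linarith
  then have "(1::real) \<le> real (((M - 1) choose (N - 1))^2)" by simp
  then have "\<rho> ^ M \<le> real (((M - 1) choose (N - 1))^2) * \<rho> ^ M"
    using assms(3) by (simp add: mult_le_cancel_right1)
  then have "\<rho> ^ M / c 0 \<le> T 0" unfolding T_def using c0 by (simp add: divide_right_mono)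
  also have "T 0 \<le> (\<Sum>j<N. T j)"
    using assms by (intro member_le_sum) (auto simp: T_def)
  finally show ?thesis unfolding CC_def T_def .
qed

text \<open>On the diagonal: a^M \<le> \<rho>^M \<le> C c_0 \<le> C \<Sum> c_k a^k = a^M forces a = \<rho>, and then a second
  term c_1 \<rho> > 0 would make the last inequality strict.\<close>
lemma power_eq_CC_sum_imp:
  assumes rho: "0 < \<rho>" and N1: "1 \<le> N" and NM: "N \<le> M" and cpos: "\<forall>j<N. 0 < c j"
    and a: "0 \<le> a" "a \<le> \<rho>" and eq: "a ^ M = CC c M N \<rho> * (\<Sum>k<N. c k * a ^ k)"
  shows "N = 1 \<and> a = \<rho>"
proof -
  define C where "C = CC c M N \<rho>"
  have c0: "0 < c 0" using cpos N1 by simp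
  have "\<rho> ^ M \<le> C * c 0" using CC_ge_first_term[OF N1 NM _ cpos] rho c0 unfolding C_def
    by (simp add: divide_le_eq)
  then have C0: "0 < C" using rho c0 by (smt (verit) mult_nonpos_nonneg zero_less_power)
  have terms: "0 \<le> c k * a ^ k" if "k < N" for k using cpos[rule_format, OF that] a by simp
  have "C * c 0 \<le> C * (\<Sum>k<N. c k * a ^ k)"
    using C0 terms N1 member_le_sum[of 0 "{..<N}" "\<lambda>k. c k * a ^ k"] by (simp add: mult_left_mono)
  moreover have "a ^ M \<le> \<rho> ^ M" using a by (intro power_mono)
  ultimately have "a ^ M = \<rho> ^ M" using \<open>\<rho> ^ M \<le> C * c 0\<close> eq unfolding C_def by linarith
  then have a_rho: "a = \<rho>" using a rho NM N1 by (simp add: power_eq_iff_eq_base)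
  have "N = 1"
  proof (rule ccontr)
    assume "N \<noteq> 1"
    then have "{..<2} \<subseteq> {..<N}" using N1 by auto
    then have "c 0 + c 1 * \<rho> \<le> (\<Sum>k<N. c k * a ^ k)"
      using sum_mono2[of "{..<N}" "{..<2}" "\<lambda>k. c k * a ^ k"] terms a_rho
      by (simp add: numeral_2_eq_2)
    moreover have "0 < c 1" using cpos \<open>N \<noteq> 1\<close> N1 by simp
    ultimately have "C * c 0 < C * (\<Sum>k<N. c k * a ^ k)"
      using C0 rho by (smt (verit) mult_less_cancel_left_pos mult_pos_pos)
    then show False using \<open>\<rho> ^ M \<le> C * c 0\<close> \<open>a ^ M = \<rho> ^ M\<close> eq unfolding C_def by linarith
  qed
  then show ?thesis using a_rho by simp
qed

lemma PN_disc_power_identity: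
  assumes rho: "0 < \<rho>" and N1: "1 \<le> N" and NM: "N \<le> M" and cpos: "\<forall>j<N. 0 < c j"
    and A: "A \<in> PN_disc N \<rho>"
    and eq: "\<forall>i<N. \<forall>j<N. A i j ^ M = complex_of_real (CC c M N \<rho>) * (\<Sum>k<N. complex_of_real (c k) * A i j ^ k)"
  shows "N = 1 \<and> A 0 0 = complex_of_real \<rho>"
proof -
  have psdA: "psd {..<N} A" and A00: "cmod (A 0 0) \<le> \<rho>"
    using A N1 unfolding PN_disc_def by (auto intro: psd_on_imp_psd)
  define a where "a = Re (A 0 0)"
  have Aa: "A 0 0 = complex_of_real a" and a0: "0 \<le> a"
    using psd_diag(2,3)[OF psdA, of 0] N1 unfolding a_def by auto
  have "A 0 0 ^ M = complex_of_real (CC c M N \<rho>) * (\<Sum>k<N. complex_of_real (c k) * A 0 0 ^ k)"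
    using eq[rule_format, of 0 0] N1 by simp
  then have "complex_of_real (a ^ M) = complex_of_real (CC c M N \<rho> * (\<Sum>k<N. c k * a ^ k))"
    unfolding Aa by simp
  then have "N = 1 \<and> a = \<rho>"
    using power_eq_CC_sum_imp[OF rho N1 NM cpos a0] A00 unfolding Aa of_real_eq_iff by simp
  then show ?thesis using Aa by simp
qed

theorem mainTheorem6:
  fixes \<rho> :: real and M N :: nat and c :: "nat \<Rightarrow> real"
    and f :: "complex \<Rightarrow> complex"
  assumes rho_pos: "\<rho> > 0"
    and MN: "M \<ge> N" and N1: "N \<ge> 1"
    and c_pos: "\<forall>j<N. c j > 0"
    and f_def: "\<forall>z. f z = (\<Sum>j<N. complex_of_real (c j) * z ^ j)
                         - complex_of_real (inverse (CC c M N \<rho>)) * z ^ M"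
  shows "(\<forall>A \<in> PN_disc N \<rho>. N > 1 \<longrightarrow>
            (\<exists>i<N. inj_on (\<lambda>j. A i j) {..<N} \<or> inj_on (\<lambda>j. A j i) {..<N}) \<longrightarrow>
            posdef_on N (\<lambda>i j. f (A i j)))
       \<and> (\<forall>A \<in> PN_disc N \<rho>.
            (\<forall>i<N. \<forall>j<N. A i j ^ M =
               complex_of_real (CC c M N \<rho>) * (\<Sum>k<N. complex_of_real (c k) * A i j ^ k))
            \<longrightarrow> N = 1 \<and> A 0 0 = complex_of_real \<rho>)"
proof (rule conjI; intro ballI impI)
  have "0 < \<rho> ^ M / c 0" using rho_pos c_pos N1 by simp
  then have CC_pos: "0 < CC c M N \<rho>"
    using CC_ge_first_term[OF N1 MN less_imp_le[OF rho_pos] c_pos] by linarith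
  have f: "f = fpoly c N (inverse (CC c M N \<rho>)) M" by (rule ext) (simp add: f_def fpoly_def)
  fix A assume A: "A \<in> PN_disc N \<rho>"
  show "posdef_on N (\<lambda>i j. f (A i j))"
    if "N > 1" "\<exists>i<N. inj_on (\<lambda>j. A i j) {..<N} \<or> inj_on (\<lambda>j. A j i) {..<N}"
    using posdef_on_fpoly[OF that(1) MN rho_pos c_pos _ _ A that(2)] CC_pos unfolding f by simp
  show "N = 1 \<and> A 0 0 = complex_of_real \<rho>" if "\<forall>i<N. \<forall>j<N. A i j ^ M =
      complex_of_real (CC c M N \<rho>) * (\<Sum>k<N. complex_of_real (c k) * A i j ^ k)"
    using PN_disc_power_identity[OF rho_pos N1 MN c_pos A that] .
qed

end
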